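(* Let $\sigma=\tanh$. Then, for the covariances and metric defined in the context: 1. If $\sigma_w^2=1$, then $\lim_{L\to\infty}\mathrm{FSP}_L(\sigma_w^2)=0$. 2. If $0<\sigma_w^2<1$, then $\mathrm{FSP}_L(\sigma_w^2)\le\frac{C}{d_0}\sigma_w^{2L}$ for every $L\ge1$.
   Context: Let $\mathcal G$ be a finite undirected graph with $n$ nodes, adjacency matrix $A$, degree matrix $D=\mathrm{diag}(A\mathbf 1_n)$, $\tilde A=A+I$, $\tilde D=D+I$, $\hat A=\tilde D^{-1/2}\tilde A\tilde D^{-1/2}$. Let $X\in\mathbb R^{n\times d_0}$ be nonzero, $C\ge1$ an integer, $\sigma_w^2>0$. For positive semidefinite $\Sigma\in\mathbb R^{n\times n}$, $G(\Sigma)=\mathbb E_{h\sim N(\mathbf 0_n,\Sigma)}[\sigma(h)\sigma(h)^\top]$ ($\sigma$ entrywise). Define $\Sigma^{(1)}=\frac{\sigma_w^2}{d_0}\hat AXX^\top\hat A$ and $\Sigma^{(l+1)}=\sigma_w^2\hat AG(\Sigma^{(l)})\hat A$. With $H\in\mathbb R^{n\times C}$ having i.i.d. columns $N(\mathbf 0_n,\Sigma^{(L)})$, $\mathrm{FSP}_L(\sigma_w^2)=\mathbb E[\|H\|_F^2/\|X\|_F^2]$. *)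

theory Defs
  imports "HOL-Probability.Probability"
begin

text \<open>Matrices are rendered as \<open>real^'m^'n\<close> (n rows, m columns); the number of
  nodes is \<open>n = CARD('n)\<close> and the feature dimension is \<open>d0 = CARD('d)\<close>.\<close>

definition adjacency_matrix :: "real^'n^'n \<Rightarrow> bool" where
  "adjacency_matrix A \<longleftrightarrow>
     (\<forall>i j. A$i$j = 0 \<or> A$i$j = 1) \<and> (\<forall>i j. A$i$j = A$j$i) \<and> (\<forall>i. A$i$i = 0)"

definition diag_mat :: "real^'n \<Rightarrow> real^'n^'n" where
  "diag_mat v = (\<chi> i j. if i = j then v$i else 0)"

definition degree_mat :: "real^'n^'n \<Rightarrow> real^'n^'n" where
  "degree_mat A = diag_mat (A *v (\<chi> i. 1))"

definition A_tilde :: "real^'n^'n \<Rightarrow> real^'n^'n" where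
  "A_tilde A = A + mat 1"

definition D_tilde :: "real^'n^'n \<Rightarrow> real^'n^'n" where
  "D_tilde A = degree_mat A + mat 1"

text \<open>\<open>D_tilde^{-1/2}\<close> (D_tilde is diagonal with positive diagonal).\<close>
definition D_tilde_inv_sqrt :: "real^'n^'n \<Rightarrow> real^'n^'n" where
  "D_tilde_inv_sqrt A = diag_mat (\<chi> i. 1 / sqrt (D_tilde A $ i $ i))"

definition A_hat :: "real^'n^'n \<Rightarrow> real^'n^'n" where
  "A_hat A = D_tilde_inv_sqrt A ** A_tilde A ** D_tilde_inv_sqrt A"

abbreviation std_gauss :: "(real^'n) measure" where
  "std_gauss \<equiv> density lborel (\<lambda>x. ennreal (\<Prod>i\<in>UNIV. std_normal_density (x$i)))"

text \<open>Centered Gaussian \<open>N(0,\<Sigma>)\<close> for a positive semidefinite \<open>\<Sigma>\<close> (possibly singular):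
  the law of \<open>B z\<close>, \<open>z\<close> standard Gaussian, where \<open>B B^T = \<Sigma>\<close>.\<close>
definition gauss :: "real^'n^'n \<Rightarrow> (real^'n) measure" where
  "gauss S = distr (std_gauss :: (real^'n) measure) borel (\<lambda>z. (SOME B::real^'n^'n. B ** transpose B = S) *v z)"

definition psd :: "real^'n^'n \<Rightarrow> bool" where
  "psd S \<longleftrightarrow> transpose S = S \<and> (\<forall>x. 0 \<le> x \<bullet> (S *v x))"

definition Gmap :: "(real \<Rightarrow> real) \<Rightarrow> real^'n^'n \<Rightarrow> real^'n^'n" where
  "Gmap \<sigma> S = (\<chi> i j. \<integral>h. \<sigma> (h$i) * \<sigma> (h$j) \<partial>gauss S)"

definition transpose_rect :: "real^'m^'n \<Rightarrow> real^'n^'m" where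
  "transpose_rect X = (\<chi> j i. X$i$j)"

text \<open>\<open>Sigma_seq \<sigma> s A X k = \<Sigma>^(k+1)\<close>, where \<open>s = \<sigma>_w^2\<close>.\<close>
primrec Sigma_seq :: "(real \<Rightarrow> real) \<Rightarrow> real \<Rightarrow> real^'n^'n \<Rightarrow> real^'d^'n \<Rightarrow> nat \<Rightarrow> real^'n^'n" where
  "Sigma_seq \<sigma> s A X 0 = (s / real CARD('d)) *\<^sub>R (A_hat A ** (X ** transpose_rect X) ** A_hat A)"
| "Sigma_seq \<sigma> s A X (Suc k) = s *\<^sub>R (A_hat A ** Gmap \<sigma> (Sigma_seq \<sigma> s A X k) ** A_hat A)"

definition Sigma_layer :: "(real \<Rightarrow> real) \<Rightarrow> real \<Rightarrow> real^'n^'n \<Rightarrow> real^'d^'n \<Rightarrow> nat \<Rightarrow> real^'n^'n" where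
  "Sigma_layer \<sigma> s A X L = Sigma_seq \<sigma> s A X (L - 1)"

definition frob_sq :: "real^'m^'n \<Rightarrow> real" where
  "frob_sq M = (\<Sum>i\<in>UNIV. \<Sum>j\<in>UNIV. (M$i$j)^2)"

text \<open>\<open>FSP_L(\<sigma>_w^2) = E[\<parallel>H\<parallel>_F^2/\<parallel>X\<parallel>_F^2]\<close>, where H has C i.i.d. columns
  \<open>h_c ~ N(0,\<Sigma>^(L))\<close>, c < C.\<close>
definition FSP :: "(real \<Rightarrow> real) \<Rightarrow> nat \<Rightarrow> real^'n^'n \<Rightarrow> real^'d^'n \<Rightarrow> nat \<Rightarrow> real \<Rightarrow> real" where
  "FSP \<sigma> C A X L s =
     (\<integral>H. (\<Sum>c<C. (norm (H c))^2) / frob_sq X \<partial>(PiM {..<C} (\<lambda>_. gauss (Sigma_layer \<sigma> s A X L))))"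

end

theory Submission
  imports Defs
begin

text \<open>Let t(l) be the trace of \<Sigma>^(l+1), so that FSP_L = C t(L-1) / \<parallel>X\<parallel>_F^2.
  The normalised adjacency matrix \<open>\<hat>A\<close> is a contraction, hence tr (\<open>\<hat>A\<close> G \<open>\<hat>A\<close>) \<le> tr G
  and t(0) \<le> \<sigma>_w^2 \<parallel>X\<parallel>_F^2 / d_0. For tanh one has tanh(x)^2 \<le> 1 - exp(-x^2) = x^2 - \<psi>(x^2)
  with the convex \<psi>(u) = exp_defect u = u - 1 + exp(-u) \<ge> 0, so Jensen's inequality gives
  G(\<Sigma>)_ii \<le> \<Sigma>_ii - \<psi>(\<Sigma>_ii). Consequently t(l+1) \<le> \<sigma>_w^2 t(l), which is the geometric
  bound, and for \<sigma>_w^2 = 1 even t(l+1) \<le> t(l) - \<psi>(t(l)/n), which forces t(l) \<rightarrow> 0.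
  Computing Gaussian second moments requires N(0,\<Sigma>) to be the law of B z with B B^T = \<Sigma>,
  i.e.\ a factorisation of every positive semidefinite matrix, obtained by Gaussian elimination
  on the quadratic form.\<close>

section \<open>Factorisation of positive semidefinite matrices\<close>

definition quad_form :: "'a set \<Rightarrow> ('a \<Rightarrow> 'a \<Rightarrow> real) \<Rightarrow> ('a \<Rightarrow> real) \<Rightarrow> real" where
  "quad_form I S x = (\<Sum>i\<in>I. \<Sum>j\<in>I. x i * S i j * x j)"

lemma quad_form_insert:
  assumes "finite I" "a \<notin> I" "\<And>i j. S i j = S j i"
  shows "quad_form (insert a I) S x
       = x a * S a a * x a + 2 * x a * (\<Sum>j\<in>I. S a j * x j) + quad_form I S x"
proof -
  have "quad_form (insert a I) S x
      = (\<Sum>j\<in>insert a I. x a * S a j * x j) + (\<Sum>i\<in>I. \<Sum>j\<in>insert a I. x i * S i j * x j)"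
    using assms by (simp add: quad_form_def)
  also have "(\<Sum>j\<in>insert a I. x a * S a j * x j) = x a * S a a * x a + x a * (\<Sum>j\<in>I. S a j * x j)"
    using assms by (simp add: sum_distrib_left algebra_simps)
  also have "(\<Sum>i\<in>I. \<Sum>j\<in>insert a I. x i * S i j * x j)
     = x a * (\<Sum>j\<in>I. S a j * x j) + quad_form I S x"
    using assms by (simp add: quad_form_def sum.distrib sum_distrib_left algebra_simps)
  finally show ?thesis by simp
qed

lemma quad_form_eq_on_support:
  assumes "finite I" "J \<subseteq> I" "\<And>i. i \<in> I - J \<Longrightarrow> x i = 0"
  shows "quad_form I S x = quad_form J S x"
proof -
  have "quad_form I S x = (\<Sum>i\<in>I. \<Sum>j\<in>J. x i * S i j * x j)"
    unfolding quad_form_def using assms by (intro sum.cong refl sum.mono_neutral_right) auto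
  also have "\<dots> = quad_form J S x"
    unfolding quad_form_def using assms by (intro sum.mono_neutral_right) auto
  finally show ?thesis .
qed

lemma psd_zero_diag_imp_zero_row:
  assumes "finite I" "\<And>i j. S i j = S j i" "\<And>x. 0 \<le> quad_form I S x"
    and "a \<in> I" "j \<in> I" "S a a = 0"
  shows "S a j = 0"
proof (rule ccontr)
  assume ne: "S a j \<noteq> 0"
  then have ja: "j \<noteq> a" using assms(6) by auto
  define t where "t = - (S j j + 1) / (2 * S a j)"
  define x where "x i = (if i = a then t else if i = j then 1 else 0)" for i
  have "quad_form I S x = quad_form {a, j} S x"
    using assms(1,4,5) by (intro quad_form_eq_on_support) (auto simp: x_def)
  also have "\<dots> = 2 * t * S a j + S j j"
    using ja assms(2,6) by (simp add: quad_form_insert quad_form_def x_def)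
  also have "\<dots> = -1"
    using ne by (simp add: t_def field_simps)
  finally show False using assms(3)[of x] by simp
qed

lemma schur_complement_nonneg:
  assumes "finite I" "a \<notin> I" "\<And>i j. S i j = S j i" "\<And>x. 0 \<le> quad_form (insert a I) S x"
  shows "0 \<le> quad_form I (\<lambda>i j. S i j - S i a * S a j / S a a) x"
proof -
  define c where "c = (\<Sum>j\<in>I. S a j * x j)"
  \<comment> \<open>Minimise over the \<open>a\<close>-coordinate; if \<open>S a a = 0\<close>, division by zero makes \<open>y = x(a := 0)\<close>.\<close>
  define y where "y = x(a := - c / S a a)"
  have y_I: "(\<Sum>j\<in>I. S a j * y j) = c" "quad_form I S y = quad_form I S x"
    using assms(2) by (auto simp: c_def y_def quad_form_def intro!: sum.cong)
  have "0 \<le> quad_form (insert a I) S y" by (rule assms(4))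
  also have "\<dots> = quad_form I S x - c * c / S a a"
    using y_I by (simp add: quad_form_insert[OF assms(1-3)] y_def)
  also have "c * c / S a a = quad_form I (\<lambda>i j. S i a * S a j / S a a) x"
  proof -
    have "quad_form I (\<lambda>i j. S i a * S a j / S a a) x
        = (\<Sum>i\<in>I. x i * S i a) * (\<Sum>j\<in>I. S a j * x j) / S a a"
      unfolding quad_form_def by (subst sum_product) (simp add: sum_divide_distrib algebra_simps)
    moreover have "(\<Sum>i\<in>I. x i * S i a) = c"
      unfolding c_def using assms(3) by (intro sum.cong) (auto simp: algebra_simps)
    ultimately show ?thesis by (simp add: c_def)
  qed
  also have "quad_form I S x - \<dots> = quad_form I (\<lambda>i j. S i j - S i a * S a j / S a a) x"
    by (simp add: quad_form_def sum_subtractf[symmetric] algebra_simps)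
  finally show ?thesis .
qed

lemma psd_factorization:
  assumes "finite I" "\<And>i j. S i j = S j i" "\<And>x. 0 \<le> quad_form I S x"
  shows "\<exists>B. \<forall>i\<in>I. \<forall>j\<in>I. S i j = (\<Sum>k\<in>I. B i k * B j k)"
  using assms
proof (induction I arbitrary: S rule: finite_induct)
  case empty
  then show ?case by simp
next
  case (insert a I)
  note fin = insert.hyps(1) and aI = insert.hyps(2) and sym = insert.prems(1)
  define S' where "S' i j = S i j - S i a * S a j / S a a" for i j
  obtain B where B: "\<And>i j. i \<in> I \<Longrightarrow> j \<in> I \<Longrightarrow> S' i j = (\<Sum>k\<in>I. B i k * B j k)"
  proof -
    have "\<exists>B. \<forall>i\<in>I. \<forall>j\<in>I. S' i j = (\<Sum>k\<in>I. B i k * B j k)"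
    proof (rule insert.IH)
      show "S' i j = S' j i" for i j
        unfolding S'_def using sym[of i j] sym[of i a] sym[of a j] by (simp add: algebra_simps)
      show "0 \<le> quad_form I S' x" for x
        unfolding S'_def using fin aI sym insert.prems(2) by (rule schur_complement_nonneg)
    qed
    then show ?thesis using that by blast
  qed
  have "0 \<le> quad_form (insert a I) S (\<lambda>i. if i = a then 1 else 0)"
    by (rule insert.prems(2))
  also have "\<dots> = S a a"
    using fin by (subst quad_form_eq_on_support[where J = "{a}"]) (auto simp: quad_form_def)
  finally have Saa: "0 \<le> S a a" .
  have zero_row: "S a j = 0" if "S a a = 0" "j \<in> I" for j
    by (rule psd_zero_diag_imp_zero_row[of "insert a I", OF _ sym insert.prems(2)]) (use fin that in auto)
  have rank_one: "S i j = S i a * S j a / S a a"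
    if "i \<in> insert a I" "j \<in> insert a I" "i = a \<or> j = a" for i j
  proof (cases "S a a = 0")
    case True
    then have "S i j = 0"
      using that zero_row[of i] zero_row[of j] sym[of a j] sym[of i a] by auto
    with True show ?thesis by simp
  next
    case False
    then show ?thesis using that sym[of a j] by auto
  qed
  \<comment> \<open>The first column of the factor is the scaled \<open>a\<close>-column of \<open>S\<close>; the rest factors the Schur complement.\<close>
  define B' where "B' i k = (if k = a then S i a / sqrt (S a a) else if i = a then 0 else B i k)" for i k
  have "S i j = (\<Sum>k\<in>insert a I. B' i k * B' j k)" if ij: "i \<in> insert a I" "j \<in> insert a I" for i j
  proof -
    have "(\<Sum>k\<in>insert a I. B' i k * B' j k) = B' i a * B' j a + (\<Sum>k\<in>I. B' i k * B' j k)"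
      using fin aI by simp
    also have "B' i a * B' j a = S i a * S j a / S a a"
      using Saa by (simp add: B'_def)
    finally have split: "(\<Sum>k\<in>insert a I. B' i k * B' j k) = S i a * S j a / S a a + (\<Sum>k\<in>I. B' i k * B' j k)" .
    show ?thesis
    proof (cases "i = a \<or> j = a")
      case True
      have "(\<Sum>k\<in>I. B' i k * B' j k) = 0"
        using True aI by (auto simp: B'_def intro!: sum.neutral)
      then show ?thesis using split rank_one[OF ij True] by linarith
    next
      case False
      then have "(\<Sum>k\<in>I. B' i k * B' j k) = (\<Sum>k\<in>I. B i k * B j k)"
        using aI by (intro sum.cong) (auto simp: B'_def)
      also have "\<dots> = S' i j"
        using False ij B by simp
      finally show ?thesis using split sym[of a j] by (simp add: S'_def)
    qed
  qed
  then show ?case by blast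
qed

lemma inner_mult_eq_quad_form: "x \<bullet> (M *v x) = quad_form UNIV (\<lambda>i j. M$i$j) (\<lambda>i. x$i)"
  by (simp add: quad_form_def inner_vec_def matrix_vector_mult_def sum_distrib_left algebra_simps)

lemma psd_imp_factorization:
  fixes S :: "real^'n^'n"
  assumes "psd S"
  shows "\<exists>B::real^'n^'n. B ** transpose B = S"
proof -
  have sym: "S$i$j = S$j$i" for i j
    using assms unfolding psd_def by (metis transpose_def vec_lambda_beta)
  have nonneg: "0 \<le> quad_form UNIV (\<lambda>i j. S$i$j) x" for x
  proof -
    have "0 \<le> (\<chi> i. x i) \<bullet> (S *v (\<chi> i. x i))"
      using assms by (simp add: psd_def)
    then show ?thesis by (simp add: inner_mult_eq_quad_form)
  qed
  obtain B :: "'n \<Rightarrow> 'n \<Rightarrow> real" where B: "\<And>i j. S$i$j = (\<Sum>k\<in>UNIV. B i k * B j k)"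
    using psd_factorization[of UNIV "\<lambda>i j. S$i$j", OF finite_class.finite_UNIV sym nonneg] by blast
  have "(\<chi> i k. B i k) ** transpose (\<chi> i k. B i k) = S"
    by (simp add: vec_eq_iff matrix_matrix_mult_def transpose_def B)
  then show ?thesis by blast
qed

section \<open>Inequalities for tanh\<close>

lemma tanh_le_self:
  fixes x :: real
  assumes "0 \<le> x"
  shows "tanh x \<le> x"
proof -
  have "(\<lambda>x. x - tanh x) 0 \<le> (\<lambda>x. x - tanh x) x"
  proof (rule DERIV_nonneg_imp_nondecreasing[OF assms])
    fix y :: real
    show "\<exists>d. ((\<lambda>x. x - tanh x) has_real_derivative d) (at y) \<and> 0 \<le> d"
      by (rule exI[of _ "1 - (1 - tanh y ^ 2)"]) (auto intro!: derivative_eq_intros)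
  qed
  then show ?thesis by simp
qed

lemma cosh_le_exp_half_square: "cosh (x::real) \<le> exp (x\<^sup>2 / 2)"
proof -
  have "cosh y \<le> exp (y\<^sup>2 / 2)" if "0 \<le> y" for y :: real
  proof -
    \<comment> \<open>\<open>(y\<^sup>2/2 - ln (cosh y))' = y - tanh y \<ge> 0\<close>\<close>
    have "(\<lambda>x. x\<^sup>2 / 2 - ln (cosh x)) 0 \<le> (\<lambda>x. x\<^sup>2 / 2 - ln (cosh x)) y"
    proof (rule DERIV_nonneg_imp_nondecreasing[OF that])
      fix z :: real assume "0 \<le> z"
      then have "0 \<le> z - sinh z / cosh z"
        using tanh_le_self[of z] by (simp add: tanh_def)
      moreover have "((\<lambda>x. x\<^sup>2 / 2 - ln (cosh x)) has_real_derivative (z - sinh z / cosh z)) (at z)"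
        by (auto intro!: derivative_eq_intros simp: field_simps power2_eq_square)
      ultimately show "\<exists>d. ((\<lambda>x. x\<^sup>2 / 2 - ln (cosh x)) has_real_derivative d) (at z) \<and> 0 \<le> d"
        by blast
    qed
    then have "ln (cosh y) \<le> y\<^sup>2 / 2" by simp
    then show ?thesis by (metis cosh_real_pos exp_le_cancel_iff exp_ln)
  qed
  from this[of x] this[of "-x"] show ?thesis
    by (cases "0 \<le> x") auto
qed

lemma tanh_square_le: "(tanh (x::real))\<^sup>2 \<le> 1 - exp (- x\<^sup>2)"
proof -
  have c: "cosh x > 0" by simp
  have "(cosh x)\<^sup>2 \<le> (exp (x\<^sup>2 / 2))\<^sup>2"
    using cosh_le_exp_half_square[of x] c by (intro power_mono) auto
  also have "\<dots> = exp (x\<^sup>2)"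
    by (simp add: exp_double[symmetric])
  finally have "exp (- x\<^sup>2) \<le> 1 / (cosh x)\<^sup>2"
    using c by (simp add: exp_minus field_simps)
  moreover have "(tanh x)\<^sup>2 = 1 - 1 / (cosh x)\<^sup>2"
  proof -
    have "(tanh x)\<^sup>2 = (sinh x)\<^sup>2 / (cosh x)\<^sup>2" by (simp add: tanh_def power_divide)
    also have "(sinh x)\<^sup>2 = (cosh x)\<^sup>2 - 1" by (simp add: cosh_square_eq)
    finally show ?thesis using c by (simp add: diff_divide_distrib)
  qed
  ultimately show ?thesis by simp
qed

text \<open>The loss of the second moment under \<open>tanh\<close>: by the previous lemma
  \<open>tanh\<^sup>2 x \<le> x\<^sup>2 - exp_defect (x\<^sup>2)\<close>.\<close>
definition exp_defect :: "real \<Rightarrow> real" where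
  "exp_defect u = u - 1 + exp (- u)"

lemma exp_defect_nonneg: "0 \<le> exp_defect u"
  using exp_ge_add_one_self[of "- u"] by (simp add: exp_defect_def)

lemma exp_defect_pos: "0 < u \<Longrightarrow> 0 < exp_defect u"
  using exp_minus_greater[of u] by (simp add: exp_defect_def)

lemma exp_defect_mono:
  assumes "0 \<le> u" "u \<le> v"
  shows "exp_defect u \<le> exp_defect v"
proof -
  have "exp (- u) * (1 - (v - u)) \<le> exp (- u) * exp (- (v - u))"
    using exp_minus_ge[of "v - u"] by (intro mult_left_mono) auto
  also have "\<dots> = exp (- v)" by (simp flip: exp_add)
  finally have "exp (- u) - exp (- v) \<le> exp (- u) * (v - u)" by (simp add: algebra_simps)
  also have "\<dots> \<le> v - u" using assms by (intro mult_left_le_one_le) auto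
  finally show ?thesis by (simp add: exp_defect_def)
qed

lemma convex_exp_defect: "convex_on UNIV exp_defect"
  unfolding exp_defect_def
  by (rule f''_ge0_imp_convex[where f'="\<lambda>u. 1 - exp (- u)" and f''="\<lambda>u. exp (- u)"])
     (auto intro!: derivative_eq_intros)

section \<open>Centred Gaussian measures\<close>

abbreviation std_normal :: "real measure" where
  "std_normal \<equiv> density lborel std_normal_density"

abbreviation std_normal_Basis :: "(real^'n \<Rightarrow> real) measure" where
  "std_normal_Basis \<equiv> PiM Basis (\<lambda>_. std_normal)"

definition of_coords :: "(real^'n \<Rightarrow> real) \<Rightarrow> real^'n" where
  "of_coords f = (\<Sum>b\<in>Basis. f b *\<^sub>R b)"

lemma of_coords_nth: "of_coords f $ i = f (axis i 1)"
proof -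
  have "of_coords f $ i = of_coords f \<bullet> axis i 1" by (simp add: inner_axis)
  also have "\<dots> = (\<Sum>b\<in>Basis. f b * (b \<bullet> axis i 1))"
    by (simp add: of_coords_def inner_sum_left)
  also have "\<dots> = (\<Sum>b\<in>Basis. if b = axis i 1 then f b else 0)"
    by (rule sum.cong) (auto simp: inner_Basis)
  finally show ?thesis by simp
qed

lemma prob_space_std_normal: "prob_space std_normal"
  by (rule prob_space_normal_density) simp

lemma prob_space_std_normal_Basis: "prob_space std_normal_Basis"
  by (rule prob_space_PiM) (rule prob_space_std_normal)

lemma product_sigma_finite_std_normal: "product_sigma_finite (\<lambda>_. std_normal)"
  unfolding product_sigma_finite_def
  by (simp add: prob_space_imp_sigma_finite prob_space_std_normal)

lemma of_coords_measurable_lborel[measurable]: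
  "of_coords \<in> borel_measurable (PiM (Basis :: (real^'n) set) (\<lambda>_. lborel))"
  unfolding of_coords_def by measurable

lemma of_coords_measurable[measurable]: "of_coords \<in> borel_measurable std_normal_Basis"
  using of_coords_measurable_lborel by (subst measurable_cong_sets[OF sets_PiM_cong refl]) auto

lemma Basis_real_vec: "(Basis :: (real^'n) set) = range (\<lambda>i. axis i 1)"
  by (auto simp: Basis_vec_def)

lemma prod_axis_eq_prod_Basis: "(\<Prod>i\<in>UNIV. g (axis i (1::real))) = (\<Prod>b\<in>(Basis::(real^'n) set). g b)"
proof -
  have "inj (\<lambda>i::'n. axis i (1::real))" by (auto simp: inj_on_def axis_eq_axis)
  then show ?thesis by (simp add: Basis_real_vec prod.reindex)
qed

text \<open>Realising \<open>std_gauss\<close> as a product measure gives access to product formulas for moments.\<close>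
lemma std_gauss_eq_distr_PiM: "(std_gauss :: (real^'n) measure) = distr std_normal_Basis borel of_coords"
proof -
  interpret L: product_sigma_finite "\<lambda>_::real^'n. lborel" by standard
  interpret N: product_sigma_finite "\<lambda>_::real^'n. std_normal" by (rule product_sigma_finite_std_normal)
  let ?g = "\<lambda>x::real^'n. ennreal (\<Prod>i\<in>UNIV. std_normal_density (x$i))"
  let ?L = "PiM (Basis :: (real^'n) set) (\<lambda>_. lborel)"
  have [measurable]: "?g \<in> borel_measurable borel" by measurable
  have "std_gauss = density (distr ?L borel of_coords) ?g"
    unfolding of_coords_def by (simp flip: lborel_eq)
  also have "\<dots> = distr (density ?L (\<lambda>f. ?g (of_coords f))) borel of_coords"
    by (rule density_distr) measurable
  also have "density ?L (\<lambda>f. ?g (of_coords f)) = std_normal_Basis"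
  proof (rule N.PiM_eqI)
    show "sets (density ?L (\<lambda>f. ?g (of_coords f))) = sets std_normal_Basis"
      by (simp only: sets_density) (rule sets_PiM_cong; simp)
  next
    fix A :: "real^'n \<Rightarrow> real set"
    assume "\<And>i. i \<in> Basis \<Longrightarrow> A i \<in> sets std_normal"
    then have A: "A b \<in> sets borel" if "b \<in> Basis" for b using that by simp
    have "emeasure (density ?L (\<lambda>f. ?g (of_coords f))) (Pi\<^sub>E Basis A)
        = (\<integral>\<^sup>+f. ?g (of_coords f) * indicator (Pi\<^sub>E Basis A) f \<partial>?L)"
      using A by (subst emeasure_density) (auto intro!: sets_PiM_I_finite)
    also have "\<dots> = (\<integral>\<^sup>+f. (\<Prod>b\<in>Basis. ennreal (std_normal_density (f b)) * indicator (A b) (f b)) \<partial>?L)"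
    proof (rule nn_integral_cong)
      fix f :: "real^'n \<Rightarrow> real" assume f: "f \<in> space ?L"
      have "?g (of_coords f) = (\<Prod>b\<in>Basis. ennreal (std_normal_density (f b)))"
        by (simp add: of_coords_nth prod_axis_eq_prod_Basis[where g="\<lambda>b. std_normal_density (f b)"] prod_ennreal)
      moreover have "indicator (Pi\<^sub>E Basis A) f = (\<Prod>b\<in>Basis. indicator (A b) (f b) :: ennreal)"
        using f by (auto simp: indicator_def space_PiM PiE_def Pi_def)
      ultimately show "?g (of_coords f) * indicator (Pi\<^sub>E Basis A) f
          = (\<Prod>b\<in>Basis. ennreal (std_normal_density (f b)) * indicator (A b) (f b))"
        by (simp add: prod.distrib)
    qed
    also have "\<dots> = (\<Prod>b\<in>Basis. \<integral>\<^sup>+x. ennreal (std_normal_density x) * indicator (A b) x \<partial>lborel)"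
      using A by (intro L.product_nn_integral_prod) auto
    also have "\<dots> = (\<Prod>b\<in>Basis. emeasure std_normal (A b))"
      using A by (intro prod.cong refl) (simp add: emeasure_density)
    finally show "emeasure (density ?L (\<lambda>f. ?g (of_coords f))) (Pi\<^sub>E Basis A)
        = (\<Prod>b\<in>Basis. emeasure std_normal (A b))" .
  qed simp
  finally show ?thesis .
qed

lemma std_normal_moments:
  shows "integrable std_normal (\<lambda>x. x ^ k)"
    and "(\<integral>x. x ^ 0 \<partial>std_normal) = 1"
    and "(\<integral>x. x \<partial>std_normal) = 0"
    and "(\<integral>x. x * x \<partial>std_normal) = 1"
proof -
  have *: "(\<integral>x. x ^ k \<partial>std_normal) = (\<integral>x. std_normal_density x * x ^ k \<partial>lborel)" for k
    by (subst integral_density) auto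
  show "integrable std_normal (\<lambda>x. x ^ k)"
    by (subst integrable_density) (auto simp: integrable_std_normal_moment)
  show "(\<integral>x. x ^ 0 \<partial>std_normal) = 1"
    using prob_space.prob_space[OF prob_space_std_normal] by simp
  show "(\<integral>x. x \<partial>std_normal) = 0"
    using integral_std_normal_moment_odd[of 0] *[of 1] by simp
  show "(\<integral>x. x * x \<partial>std_normal) = 1"
    using integral_std_normal_moment_even[of 1] *[of 2] by (simp add: power2_eq_square)
qed

lemma std_normal_Basis_covariance:
  fixes b c :: "real^'n"
  assumes "b \<in> Basis" "c \<in> Basis"
  shows "integrable std_normal_Basis (\<lambda>f. f b * f c)"
    and "(\<integral>f. f b * f c \<partial>std_normal_Basis) = (if b = c then 1 else 0)"
proof -
  interpret N: product_sigma_finite "\<lambda>_::real^'n. std_normal" by (rule product_sigma_finite_std_normal)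
  define k where "k a = (if a = b then 1 else 0) + (if a = c then 1 else (0::nat))" for a
  have monomial: "(\<Prod>a\<in>Basis. f a ^ k a) = f b * f c" for f :: "real^'n \<Rightarrow> real"
  proof -
    have "(\<Prod>a\<in>Basis. f a ^ k a) = (\<Prod>a\<in>Basis. (if a = b then f a else 1) * (if a = c then f a else 1))"
      by (intro prod.cong) (auto simp: k_def power_add)
    also have "\<dots> = f b * f c" using assms by (simp add: prod.distrib)
    finally show ?thesis .
  qed
  show "integrable std_normal_Basis (\<lambda>f. f b * f c)"
    unfolding monomial[symmetric]
    by (intro N.product_integrable_prod) (auto simp: std_normal_moments)
  have "(\<integral>f. f b * f c \<partial>std_normal_Basis) = (\<Prod>a\<in>Basis. \<integral>x. x ^ k a \<partial>std_normal)"
    unfolding monomial[symmetric]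
    by (intro N.product_integral_prod) (auto simp: std_normal_moments)
  also have "\<dots> = (if b = c then 1 else 0)"
  proof (cases "b = c")
    case True
    have "(\<integral>x. x ^ k a \<partial>std_normal) = 1" for a
      using True std_normal_moments(2,4) by (cases "a = c") (simp_all add: k_def)
    then show ?thesis using True by simp
  next
    case False
    then have "(\<integral>x. x ^ k b \<partial>std_normal) = 0" by (simp add: k_def std_normal_moments)
    then show ?thesis using assms(1) False by (auto simp: prod_zero)
  qed
  finally show "(\<integral>f. f b * f c \<partial>std_normal_Basis) = (if b = c then 1 else 0)" .
qed

definition gauss_factor :: "real^'n^'n \<Rightarrow> real^'n^'n" where
  "gauss_factor S = (SOME B. B ** transpose B = S)"

lemma matrix_vector_mult_measurable[measurable]: "(\<lambda>z::real^'n. B *v z) \<in> borel_measurable borel"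
  by (intro borel_measurable_continuous_onI continuous_intros)

lemma gauss_eq_distr_PiM: "gauss S = distr std_normal_Basis borel (\<lambda>f. gauss_factor S *v of_coords f)"
  unfolding gauss_def gauss_factor_def std_gauss_eq_distr_PiM
  by (subst distr_distr[OF matrix_vector_mult_measurable of_coords_measurable]) (simp add: comp_def)

lemma prob_space_gauss: "prob_space (gauss S)"
  unfolding gauss_eq_distr_PiM
  by (intro prob_space.prob_space_distr prob_space_std_normal_Basis) simp

lemma sets_gauss[measurable_cong, simp]: "sets (gauss S) = sets borel"
  by (simp add: gauss_def)

lemma space_gauss[simp]: "space (gauss S) = UNIV"
  by (simp add: gauss_def)

lemma gauss_coord_square:
  fixes S :: "real^'n^'n"
  shows "integrable (gauss S) (\<lambda>h. (h$i)\<^sup>2)"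
    and "(\<integral>h. (h$i)\<^sup>2 \<partial>gauss S) = (gauss_factor S ** transpose (gauss_factor S)) $ i $ i"
proof -
  let ?B = "gauss_factor S"
  have square: "((?B *v of_coords f) $ i)\<^sup>2
      = (\<Sum>j\<in>UNIV. \<Sum>k\<in>UNIV. ?B$i$j * ?B$i$k * (f (axis j 1) * f (axis k 1)))" for f
    by (simp add: matrix_vector_mult_def of_coords_nth power2_eq_square sum_product algebra_simps)
  have int: "integrable std_normal_Basis (\<lambda>f. f (axis j 1) * f (axis k 1))" for j k :: 'n
    by (rule std_normal_Basis_covariance(1)) auto
  have meas: "(\<lambda>f. ?B *v of_coords f) \<in> borel_measurable std_normal_Basis"
    by (rule measurable_compose[OF of_coords_measurable matrix_vector_mult_measurable])
  have "integrable std_normal_Basis (\<lambda>f. ((?B *v of_coords f) $ i)\<^sup>2)"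
    unfolding square by (auto intro!: integrable_sum integrable_mult_right int)
  then show "integrable (gauss S) (\<lambda>h. (h$i)\<^sup>2)"
    unfolding gauss_eq_distr_PiM using meas by (subst integrable_distr_eq) auto
  have "(\<integral>h. (h$i)\<^sup>2 \<partial>gauss S) = (\<integral>f. ((?B *v of_coords f) $ i)\<^sup>2 \<partial>std_normal_Basis)"
    unfolding gauss_eq_distr_PiM using meas by (subst integral_distr) auto
  also have "\<dots> = (\<Sum>j\<in>UNIV. \<Sum>k\<in>UNIV. ?B$i$j * ?B$i$k * (\<integral>f. f (axis j 1) * f (axis k 1) \<partial>std_normal_Basis))"
    unfolding square by (simp add: integral_sum integrable_sum integrable_mult_right int)
  also have "\<dots> = (\<Sum>j\<in>UNIV. ?B$i$j * ?B$i$j)"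
    by (simp add: std_normal_Basis_covariance(2) axis_eq_axis if_distrib cong: if_cong)
  also have "\<dots> = (?B ** transpose ?B) $ i $ i"
    by (simp add: matrix_matrix_mult_def transpose_def)
  finally show "(\<integral>h. (h$i)\<^sup>2 \<partial>gauss S) = (?B ** transpose ?B) $ i $ i" .
qed

section \<open>The normalised adjacency matrix\<close>

definition tilde_degree :: "real^'n^'n \<Rightarrow> 'n \<Rightarrow> real" where
  "tilde_degree A i = (\<Sum>j\<in>UNIV. A$i$j) + 1"

lemma A_tilde_nth: "A_tilde A $ i $ j = A$i$j + (if i = j then 1 else 0)"
  by (simp add: A_tilde_def mat_def)

lemma tilde_degree_eq_row_sum: "tilde_degree A i = (\<Sum>j\<in>UNIV. A_tilde A $ i $ j)"
  by (simp add: tilde_degree_def A_tilde_nth sum.distrib)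

lemma diag_mat_mult_nth: "(diag_mat v ** M) $ i $ j = v$i * M$i$j"
proof -
  have "(diag_mat v ** M) $ i $ j = (\<Sum>k\<in>UNIV. (if i = k then v$i else 0) * M$k$j)"
    by (simp add: matrix_matrix_mult_def diag_mat_def)
  also have "\<dots> = (\<Sum>k\<in>UNIV. if k = i then v$i * M$k$j else 0)"
    by (rule sum.cong) auto
  finally show ?thesis by simp
qed

lemma mult_diag_mat_nth: "(M ** diag_mat v) $ i $ j = M$i$j * v$j"
proof -
  have "(M ** diag_mat v) $ i $ j = (\<Sum>k\<in>UNIV. M$i$k * (if k = j then v$k else 0))"
    by (simp add: matrix_matrix_mult_def diag_mat_def)
  also have "\<dots> = (\<Sum>k\<in>UNIV. if k = j then M$i$k * v$j else 0)"
    by (rule sum.cong) auto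
  finally show ?thesis by simp
qed

lemma A_hat_nth:
  "A_hat A $ i $ j = A_tilde A $ i $ j / (sqrt (tilde_degree A i) * sqrt (tilde_degree A j))"
proof -
  have "D_tilde A $ i $ i = tilde_degree A i" for i
    by (simp add: D_tilde_def degree_mat_def diag_mat_def mat_def tilde_degree_def matrix_vector_mult_def)
  then show ?thesis
    by (simp add: A_hat_def D_tilde_inv_sqrt_def diag_mat_mult_nth mult_diag_mat_nth)
qed

context
  fixes A :: "real^'n^'n"
  assumes adj: "adjacency_matrix A"
begin

lemma A_tilde_nonneg: "0 \<le> A_tilde A $ i $ j"
  using adj unfolding adjacency_matrix_def A_tilde_nth by (metis add_nonneg_nonneg order.refl zero_le_one)

lemma A_tilde_sym: "A_tilde A $ i $ j = A_tilde A $ j $ i"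
  using adj unfolding adjacency_matrix_def A_tilde_nth by auto

lemma tilde_degree_pos: "0 < tilde_degree A i"
  using adj unfolding adjacency_matrix_def tilde_degree_def
  by (smt (verit) sum_nonneg)

lemma transpose_A_hat: "transpose (A_hat A) = A_hat A"
  by (simp add: transpose_def vec_eq_iff A_hat_nth A_tilde_sym mult.commute)

text \<open>Cauchy--Schwarz with weights \<open>\<surd>\<tilde>A\<^sub>i\<^sub>j\<close>, using that the \<open>i\<close>-th row of \<open>\<tilde>A\<close> sums to \<open>\<tilde>d\<^sub>i\<close>.\<close>
lemma A_hat_row_square_le:
  "(\<Sum>j\<in>UNIV. A_hat A $ i $ j * y j)\<^sup>2 \<le> (\<Sum>j\<in>UNIV. A_tilde A $ i $ j * ((y j)\<^sup>2 / tilde_degree A j))"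
proof -
  let ?w = "\<lambda>j. A_tilde A $ i $ j" and ?d = "tilde_degree A"
  define z where "z j = sqrt (?w j) * y j / (sqrt (?d i) * sqrt (?d j))" for j
  have "(\<Sum>j\<in>UNIV. A_hat A $ i $ j * y j) = (\<Sum>j\<in>UNIV. sqrt (?w j) * z j)"
    using A_tilde_nonneg by (intro sum.cong refl) (simp add: A_hat_nth z_def real_sqrt_mult_self)
  also have "(\<dots>)\<^sup>2 \<le> (\<Sum>j\<in>UNIV. (sqrt (?w j))\<^sup>2) * (\<Sum>j\<in>UNIV. (z j)\<^sup>2)"
    by (rule Cauchy_Schwarz_ineq_sum)
  also have "(\<Sum>j\<in>UNIV. (sqrt (?w j))\<^sup>2) = ?d i"
    by (simp add: A_tilde_nonneg tilde_degree_eq_row_sum)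
  also have "?d i * (\<Sum>j\<in>UNIV. (z j)\<^sup>2) = (\<Sum>j\<in>UNIV. ?w j * ((y j)\<^sup>2 / ?d j))"
    unfolding sum_distrib_left
  proof (intro sum.cong refl)
    fix j
    have "0 < ?d i" "0 < ?d j" "0 \<le> ?w j" by (simp_all add: tilde_degree_pos A_tilde_nonneg)
    then show "?d i * (z j)\<^sup>2 = ?w j * ((y j)\<^sup>2 / ?d j)"
      by (simp add: z_def power_mult_distrib power_divide)
  qed
  finally show ?thesis .
qed

lemma A_hat_contraction:
  "(\<Sum>i\<in>UNIV. (\<Sum>j\<in>UNIV. A_hat A $ i $ j * y j)\<^sup>2) \<le> (\<Sum>j\<in>UNIV. (y j)\<^sup>2)"
proof -
  have "(\<Sum>i\<in>UNIV. (\<Sum>j\<in>UNIV. A_hat A $ i $ j * y j)\<^sup>2)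
      \<le> (\<Sum>i\<in>UNIV. \<Sum>j\<in>UNIV. A_tilde A $ i $ j * ((y j)\<^sup>2 / tilde_degree A j))"
    by (intro sum_mono A_hat_row_square_le)
  also have "\<dots> = (\<Sum>j\<in>UNIV. (\<Sum>i\<in>UNIV. A_tilde A $ i $ j) * ((y j)\<^sup>2 / tilde_degree A j))"
    by (subst sum.swap) (simp only: sum_distrib_right)
  also have "\<dots> = (\<Sum>j\<in>UNIV. (y j)\<^sup>2)"
  proof (intro sum.cong refl)
    fix j
    have "(\<Sum>i\<in>UNIV. A_tilde A $ i $ j) = tilde_degree A j"
      by (simp add: tilde_degree_eq_row_sum A_tilde_sym)
    then show "(\<Sum>i\<in>UNIV. A_tilde A $ i $ j) * ((y j)\<^sup>2 / tilde_degree A j) = (y j)\<^sup>2"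
      using tilde_degree_pos[of j] by simp
  qed
  finally show ?thesis .
qed

end

section \<open>The covariance map\<close>

lemma psd_diag_nonneg:
  assumes "psd S"
  shows "0 \<le> S$i$i"
proof -
  have "0 \<le> axis i 1 \<bullet> (S *v axis i 1)" using assms by (simp add: psd_def)
  then show ?thesis by (simp add: inner_axis' matrix_vector_mult_basis column_def)
qed

lemma psd_scaleR:
  assumes "psd M" "0 \<le> c"
  shows "psd (c *\<^sub>R M)"
  using assms by (simp add: psd_def transpose_scalar flip: scaleR_matrix_vector_assoc)

lemma psd_congruence:
  assumes "transpose P = P" "psd M"
  shows "psd (P ** M ** P)"
  unfolding psd_def
proof
  show "transpose (P ** M ** P) = P ** M ** P"
    using assms by (simp add: psd_def matrix_transpose_mul matrix_mul_assoc)
  show "\<forall>x. 0 \<le> x \<bullet> ((P ** M ** P) *v x)"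
  proof
    fix x
    have "x \<bullet> ((P ** M ** P) *v x) = (x v* P) \<bullet> (M *v (P *v x))"
      by (simp add: matrix_vector_mul_assoc[symmetric] dot_lmul_matrix)
    also have "x v* P = P *v x" using assms(1) by (metis transpose_matrix_vector)
    finally show "0 \<le> x \<bullet> ((P ** M ** P) *v x)" using assms(2) by (simp add: psd_def)
  qed
qed

lemma transpose_rect_eq_transpose: "transpose_rect X = transpose X"
  by (simp add: transpose_rect_def transpose_def)

lemma psd_Gram: "psd (X ** transpose_rect X)"
  unfolding psd_def transpose_rect_eq_transpose
proof
  show "transpose (X ** transpose X) = X ** transpose X"
    by (simp add: matrix_transpose_mul)
  show "\<forall>x. 0 \<le> x \<bullet> ((X ** transpose X) *v x)"
  proof
    fix x
    have "x \<bullet> ((X ** transpose X) *v x) = (transpose X *v x) \<bullet> (transpose X *v x)"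
      by (simp add: matrix_vector_mul_assoc[symmetric] dot_lmul_matrix)
    then show "0 \<le> x \<bullet> ((X ** transpose X) *v x)" by simp
  qed
qed

lemma vec_nth_measurable[measurable]: "(\<lambda>h::real^'n. h$i) \<in> borel_measurable borel"
  by (intro borel_measurable_continuous_onI continuous_intros)

lemma tanh_measurable: "(tanh :: real \<Rightarrow> real) \<in> borel_measurable borel"
  by (intro borel_measurable_continuous_onI continuous_intros) (simp add: cosh_real_nonzero)

lemma abs_tanh_le_one: "\<bar>tanh (x::real)\<bar> \<le> 1"
  using tanh_real_lt_1[of x] tanh_real_gt_neg1[of x] by linarith

lemma integrable_gauss_bounded_product:
  fixes \<sigma> :: "real \<Rightarrow> real"
  assumes "\<sigma> \<in> borel_measurable borel" "\<And>x. \<bar>\<sigma> x\<bar> \<le> K"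
  shows "integrable (gauss S) (\<lambda>h. \<sigma> (h$i) * \<sigma> (h$j))"
proof -
  interpret prob_space "gauss S" by (rule prob_space_gauss)
  have K: "0 \<le> K" using assms(2)[of 0] by linarith
  show ?thesis
  proof (rule integrable_const_bound[where B = "K * K"])
    show "AE h in gauss S. norm (\<sigma> (h$i) * \<sigma> (h$j)) \<le> K * K"
      using assms(2) K by (simp add: abs_mult mult_mono)
    show "(\<lambda>h. \<sigma> (h$i) * \<sigma> (h$j)) \<in> borel_measurable (gauss S)"
      unfolding measurable_cong_sets[OF sets_gauss refl]
      by (intro borel_measurable_times measurable_compose[OF vec_nth_measurable assms(1)])
  qed
qed

lemma quad_form_integral:
  fixes u :: "'n::finite \<Rightarrow> 'a \<Rightarrow> real"
  assumes "\<And>i j. integrable M (\<lambda>h. u i h * u j h)"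
  shows "integrable M (\<lambda>h. (\<Sum>i\<in>UNIV. x i * u i h)\<^sup>2)"
    and "quad_form UNIV (\<lambda>i j. \<integral>h. u i h * u j h \<partial>M) x = (\<integral>h. (\<Sum>i\<in>UNIV. x i * u i h)\<^sup>2 \<partial>M)"
proof -
  have square: "(\<Sum>i\<in>UNIV. x i * u i h)\<^sup>2 = (\<Sum>i\<in>UNIV. \<Sum>j\<in>UNIV. (x i * x j) * (u i h * u j h))" for h
    by (simp add: power2_eq_square sum_product algebra_simps)
  show "integrable M (\<lambda>h. (\<Sum>i\<in>UNIV. x i * u i h)\<^sup>2)"
    unfolding square by (auto intro!: integrable_sum integrable_mult_right assms)
  have "(\<integral>h. (\<Sum>i\<in>UNIV. x i * u i h)\<^sup>2 \<partial>M) = (\<Sum>i\<in>UNIV. \<Sum>j\<in>UNIV. (x i * x j) * (\<integral>h. u i h * u j h \<partial>M))"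
    unfolding square by (simp add: Bochner_Integration.integral_sum Bochner_Integration.integrable_sum assms)
  then show "quad_form UNIV (\<lambda>i j. \<integral>h. u i h * u j h \<partial>M) x = (\<integral>h. (\<Sum>i\<in>UNIV. x i * u i h)\<^sup>2 \<partial>M)"
    by (simp add: quad_form_def algebra_simps)
qed

lemma psd_Gmap:
  assumes "\<sigma> \<in> borel_measurable borel" "\<And>x. \<bar>\<sigma> x\<bar> \<le> K"
  shows "psd (Gmap \<sigma> S)"
  unfolding psd_def
proof
  show "transpose (Gmap \<sigma> S) = Gmap \<sigma> S"
    by (simp add: transpose_def Gmap_def vec_eq_iff mult.commute)
  show "\<forall>x. 0 \<le> x \<bullet> (Gmap \<sigma> S *v x)"
  proof
    fix x
    have "x \<bullet> (Gmap \<sigma> S *v x) = (\<integral>h. (\<Sum>i\<in>UNIV. x$i * \<sigma> (h$i))\<^sup>2 \<partial>gauss S)"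
      unfolding inner_mult_eq_quad_form Gmap_def vec_lambda_beta
      by (rule quad_form_integral(2)) (rule integrable_gauss_bounded_product[OF assms])
    then show "0 \<le> x \<bullet> (Gmap \<sigma> S *v x)" by simp
  qed
qed

lemma congruence_diag_eq_quad_form:
  assumes "transpose P = P"
  shows "(P ** M ** P) $ i $ i = quad_form UNIV (\<lambda>j k. M$j$k) (\<lambda>j. P$i$j)"
proof -
  have sym: "P$k$i = P$i$k" for k
    using assms by (metis transpose_def vec_lambda_beta)
  have "(P ** M ** P) $ i $ i = (\<Sum>k\<in>UNIV. \<Sum>j\<in>UNIV. P$i$j * M$j$k * P$k$i)"
    by (simp add: matrix_matrix_mult_def sum_distrib_right)
  also have "\<dots> = (\<Sum>k\<in>UNIV. \<Sum>j\<in>UNIV. P$i$j * M$j$k * P$i$k)"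
    by (intro sum.cong refl) (simp only: sym)
  also have "\<dots> = quad_form UNIV (\<lambda>j k. M$j$k) (\<lambda>j. P$i$j)"
    unfolding quad_form_def by (rule sum.swap)
  finally show ?thesis .
qed

text \<open>\<open>tr (\<hat>A G \<hat>A) = E \<parallel>\<hat>A \<sigma>(h)\<parallel>\<^sup>2 \<le> E \<parallel>\<sigma>(h)\<parallel>\<^sup>2 = tr G\<close>, since \<open>\<hat>A\<close> is a contraction.\<close>
lemma trace_A_hat_Gmap_le:
  assumes "adjacency_matrix A" "\<sigma> \<in> borel_measurable borel" "\<And>x. \<bar>\<sigma> x\<bar> \<le> K"
  shows "trace (A_hat A ** Gmap \<sigma> S ** A_hat A) \<le> trace (Gmap \<sigma> S)"
proof -
  let ?P = "A_hat A" and ?u = "\<lambda>j h. \<sigma> (h$j)"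
  note int = integrable_gauss_bounded_product[OF assms(2,3)]
  have diag: "(?P ** Gmap \<sigma> S ** ?P) $ i $ i = (\<integral>h. (\<Sum>j\<in>UNIV. ?P$i$j * ?u j h)\<^sup>2 \<partial>gauss S)" for i
    unfolding congruence_diag_eq_quad_form[OF transpose_A_hat[OF assms(1)]] Gmap_def vec_lambda_beta
    by (rule quad_form_integral(2)) (rule int)
  note int_row = quad_form_integral(1)[OF int]
  have "trace (?P ** Gmap \<sigma> S ** ?P) = (\<integral>h. (\<Sum>i\<in>UNIV. (\<Sum>j\<in>UNIV. ?P$i$j * ?u j h)\<^sup>2) \<partial>gauss S)"
    unfolding trace_def diag by (rule Bochner_Integration.integral_sum[symmetric]) (rule int_row)
  also have "\<dots> \<le> (\<integral>h. (\<Sum>j\<in>UNIV. ?u j h * ?u j h) \<partial>gauss S)"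
    using A_hat_contraction[OF assms(1)]
    by (intro integral_mono Bochner_Integration.integrable_sum int int_row) (simp add: power2_eq_square)
  also have "\<dots> = trace (Gmap \<sigma> S)"
    by (simp add: trace_def Gmap_def Bochner_Integration.integral_sum int)
  finally show ?thesis .
qed

lemma gauss_factor_mult_transpose:
  "psd S \<Longrightarrow> gauss_factor S ** transpose (gauss_factor S) = S"
  unfolding gauss_factor_def by (rule someI_ex) (rule psd_imp_factorization)

lemma integral_gauss_coord_square: "psd S \<Longrightarrow> (\<integral>h. (h$i)\<^sup>2 \<partial>gauss S) = S$i$i"
  by (simp add: gauss_coord_square(2) gauss_factor_mult_transpose)

text \<open>Combines \<open>tanh\<^sup>2 x \<le> x\<^sup>2 - exp_defect (x\<^sup>2)\<close> with Jensen's inequality for the convex \<open>exp_defect\<close>.\<close>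
lemma Gmap_tanh_diag_le:
  assumes "psd S"
  shows "Gmap tanh S $ i $ i \<le> S$i$i - exp_defect (S$i$i)"
proof -
  interpret P: prob_space "gauss S" by (rule prob_space_gauss)
  have int_sq: "integrable (gauss S) (\<lambda>h. (h$i)\<^sup>2)" by (rule gauss_coord_square(1))
  have int_exp: "integrable (gauss S) (\<lambda>h. exp (- (h$i)\<^sup>2))"
    by (rule P.integrable_const_bound[where B = 1]) auto
  have int_defect: "integrable (gauss S) (\<lambda>h. exp_defect ((h$i)\<^sup>2))"
    unfolding exp_defect_def using int_sq int_exp by auto
  have int_tanh: "integrable (gauss S) (\<lambda>h. (tanh (h$i))\<^sup>2)"
    using integrable_gauss_bounded_product[OF tanh_measurable abs_tanh_le_one]
    by (simp add: power2_eq_square)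
  have "Gmap tanh S $ i $ i = (\<integral>h. (tanh (h$i))\<^sup>2 \<partial>gauss S)"
    by (simp add: Gmap_def power2_eq_square)
  also have "\<dots> \<le> (\<integral>h. (h$i)\<^sup>2 - exp_defect ((h$i)\<^sup>2) \<partial>gauss S)"
    by (rule integral_mono[OF int_tanh Bochner_Integration.integrable_diff[OF int_sq int_defect]])
      (simp add: exp_defect_def tanh_square_le)
  also have "\<dots> = S$i$i - (\<integral>h. exp_defect ((h$i)\<^sup>2) \<partial>gauss S)"
    using int_sq int_defect integral_gauss_coord_square[OF assms] by simp
  also have "\<dots> \<le> S$i$i - exp_defect (S$i$i)"
    using P.jensens_inequality[where I = UNIV and q = exp_defect, OF int_sq _ _ int_defect]
    by (simp add: convex_exp_defect integral_gauss_coord_square[OF assms])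
  finally show ?thesis .
qed

section \<open>Layer covariances\<close>

lemma trace_scaleR: "trace (c *\<^sub>R M) = c * trace M"
  by (simp add: trace_def sum_distrib_left)

lemma trace_A_hat_Gram_le:
  fixes X :: "real^'d^'n"
  assumes "adjacency_matrix A"
  shows "trace (A_hat A ** (X ** transpose_rect X) ** A_hat A) \<le> frob_sq X"
proof -
  let ?P = "A_hat A"
  define N where "N = ?P ** X"
  have "?P ** (X ** transpose_rect X) ** ?P = N ** transpose N"
    unfolding N_def transpose_rect_eq_transpose
    by (simp add: matrix_transpose_mul transpose_A_hat[OF assms] matrix_mul_assoc)
  then have "trace (?P ** (X ** transpose_rect X) ** ?P) = frob_sq N"
    by (simp add: trace_def frob_sq_def matrix_matrix_mult_def transpose_def power2_eq_square)
  also have "frob_sq N = (\<Sum>m\<in>UNIV. \<Sum>i\<in>UNIV. (\<Sum>j\<in>UNIV. ?P$i$j * X$j$m)\<^sup>2)"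
    unfolding frob_sq_def N_def by (subst sum.swap) (simp add: matrix_matrix_mult_def)
  also have "\<dots> \<le> (\<Sum>m\<in>UNIV. \<Sum>j\<in>UNIV. (X$j$m)\<^sup>2)"
    by (intro sum_mono A_hat_contraction[OF assms])
  also have "\<dots> = frob_sq X"
    unfolding frob_sq_def by (rule sum.swap)
  finally show ?thesis .
qed

lemma psd_Sigma_seq:
  fixes X :: "real^'d^'n"
  assumes "adjacency_matrix A" "0 \<le> s" "\<sigma> \<in> borel_measurable borel" "\<And>x. \<bar>\<sigma> x\<bar> \<le> K"
  shows "psd (Sigma_seq \<sigma> s A X l)"
  using assms
  by (induction l)
    (auto intro!: psd_scaleR psd_congruence transpose_A_hat psd_Gram psd_Gmap)

lemma trace_Sigma_seq_0_le:
  fixes X :: "real^'d^'n"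
  assumes "adjacency_matrix A" "0 \<le> s"
  shows "trace (Sigma_seq \<sigma> s A X 0) \<le> s / real CARD('d) * frob_sq X"
proof -
  have "s * trace (A_hat A ** (X ** transpose_rect X) ** A_hat A) \<le> s * frob_sq X"
    using assms(2) trace_A_hat_Gram_le[OF assms(1)] by (rule mult_left_mono[rotated])
  then show ?thesis by (simp add: trace_scaleR divide_right_mono)
qed

lemma trace_Sigma_seq_Suc_le:
  fixes X :: "real^'d^'n"
  assumes "adjacency_matrix A" "0 \<le> s"
  shows "trace (Sigma_seq tanh s A X (Suc l))
    \<le> s * (trace (Sigma_seq tanh s A X l) - (\<Sum>j\<in>UNIV. exp_defect (Sigma_seq tanh s A X l $ j $ j)))"
    (is "_ \<le> s * (trace ?S - _)")
proof -
  have psd: "psd ?S"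
    using assms(1,2) tanh_measurable abs_tanh_le_one by (rule psd_Sigma_seq)
  have "trace (Sigma_seq tanh s A X (Suc l)) = s * trace (A_hat A ** Gmap tanh ?S ** A_hat A)"
    by (simp add: trace_def sum_distrib_left)
  also have "\<dots> \<le> s * trace (Gmap tanh ?S)"
    using assms(2) trace_A_hat_Gmap_le[OF assms(1) tanh_measurable abs_tanh_le_one]
    by (rule mult_left_mono[rotated])
  also have "\<dots> \<le> s * (\<Sum>j\<in>UNIV. ?S$j$j - exp_defect (?S$j$j))"
    unfolding trace_def using assms(2) Gmap_tanh_diag_le[OF psd]
    by (intro mult_left_mono sum_mono) auto
  also have "\<dots> = s * (trace ?S - (\<Sum>j\<in>UNIV. exp_defect (?S$j$j)))"
    by (simp add: trace_def sum_subtractf)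
  finally show ?thesis .
qed

lemma integral_gauss_norm_square:
  assumes "psd S"
  shows "integrable (gauss S) (\<lambda>h. (norm h)\<^sup>2)" and "(\<integral>h. (norm h)\<^sup>2 \<partial>gauss S) = trace S"
proof -
  have norm_sq: "(norm h)\<^sup>2 = (\<Sum>i\<in>UNIV. (h$i)\<^sup>2)" for h :: "real^'n"
    unfolding power2_norm_eq_inner by (simp add: inner_vec_def power2_eq_square)
  show "integrable (gauss S) (\<lambda>h. (norm h)\<^sup>2)"
    unfolding norm_sq by (intro Bochner_Integration.integrable_sum gauss_coord_square(1))
  show "(\<integral>h. (norm h)\<^sup>2 \<partial>gauss S) = trace S"
    unfolding norm_sq trace_def
    by (simp add: Bochner_Integration.integral_sum gauss_coord_square(1) integral_gauss_coord_square[OF assms])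
qed

text \<open>The \<open>C\<close> columns are i.i.d. \<open>N(0,\<Sigma>)\<close>, so \<open>E \<parallel>H\<parallel>\<^sub>F\<^sup>2 = C tr \<Sigma>\<close>.\<close>
lemma FSP_eq_trace:
  fixes X :: "real^'d^'n"
  assumes "psd (Sigma_layer \<sigma> s A X L)"
  shows "FSP \<sigma> C A X L s = real C * trace (Sigma_layer \<sigma> s A X L) / frob_sq X"
proof -
  let ?S = "Sigma_layer \<sigma> s A X L"
  let ?Q = "PiM {..<C} (\<lambda>_. gauss ?S)"
  have column: "distr ?Q (gauss ?S) (\<lambda>H. H c) = gauss ?S"
    and meas: "(\<lambda>H. H c) \<in> measurable ?Q (gauss ?S)" if "c < C" for c
    using that by (auto intro: distr_PiM_component prob_space_gauss measurable_component_singleton)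
  have int: "integrable ?Q (\<lambda>H. (norm (H c))\<^sup>2)" if "c < C" for c
    using integral_gauss_norm_square(1)[OF assms]
    by (subst (asm) column[OF that, symmetric]) (simp add: integrable_distr_eq[OF meas[OF that]])
  have col_integral: "(\<integral>H. (norm (H c))\<^sup>2 \<partial>?Q) = trace ?S" if "c < C" for c
  proof -
    have "(\<integral>H. (norm (H c))\<^sup>2 \<partial>?Q) = (\<integral>h. (norm h)\<^sup>2 \<partial>distr ?Q (gauss ?S) (\<lambda>H. H c))"
      by (subst integral_distr[OF meas[OF that]]) auto
    then show ?thesis
      unfolding column[OF that] by (simp add: integral_gauss_norm_square(2)[OF assms])
  qed
  have "FSP \<sigma> C A X L s = (\<integral>H. (\<Sum>c<C. (norm (H c))\<^sup>2) \<partial>?Q) / frob_sq X"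
    unfolding FSP_def by simp
  also have "(\<integral>H. (\<Sum>c<C. (norm (H c))\<^sup>2) \<partial>?Q) = (\<Sum>c<C. trace ?S)"
    by (simp add: Bochner_Integration.integral_sum int col_integral)
  finally show ?thesis by simp
qed

lemma FSP_tanh_eq_trace:
  fixes X :: "real^'d^'n"
  assumes "adjacency_matrix A" "0 \<le> s"
  shows "FSP tanh C A X L s = real C * trace (Sigma_seq tanh s A X (L - 1)) / frob_sq X"
proof -
  have "psd (Sigma_layer tanh s A X L)"
    unfolding Sigma_layer_def by (rule psd_Sigma_seq[OF assms tanh_measurable abs_tanh_le_one])
  from FSP_eq_trace[OF this, of C] show ?thesis by (simp add: Sigma_layer_def)
qed

lemma frob_sq_pos: "X \<noteq> 0 \<Longrightarrow> 0 < frob_sq X"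
proof -
  assume "X \<noteq> 0"
  then obtain i j where ij: "X$i$j \<noteq> 0" by (metis vec_eq_iff zero_index)
  have "0 < (X$i$j)\<^sup>2" using ij by simp
  also have "\<dots> \<le> (\<Sum>j\<in>UNIV. (X$i$j)\<^sup>2)"
    by (rule member_le_sum) auto
  also have "\<dots> \<le> frob_sq X" unfolding frob_sq_def
    by (rule member_le_sum[of i UNIV "\<lambda>i. \<Sum>j\<in>UNIV. (X$i$j)\<^sup>2"]) (auto intro: sum_nonneg)
  finally show ?thesis .
qed

section \<open>Decay of the trace\<close>

lemma mono_average_le_sum:
  fixes a :: "'n::finite \<Rightarrow> real" and f :: "real \<Rightarrow> real"
  assumes "\<And>j. 0 \<le> a j"
    and mono: "\<And>u v. 0 \<le> u \<Longrightarrow> u \<le> v \<Longrightarrow> f u \<le> f v"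
    and nonneg: "\<And>u. 0 \<le> u \<Longrightarrow> 0 \<le> f u"
  shows "f ((\<Sum>j\<in>UNIV. a j) / CARD('n)) \<le> (\<Sum>j\<in>UNIV. f (a j))"
proof -
  obtain j where j: "(\<Sum>j\<in>UNIV. a j) / CARD('n) \<le> a j"
  proof (rule ccontr)
    assume "\<not> thesis"
    then have "a j < (\<Sum>j\<in>UNIV. a j) / CARD('n)" for j
      using that not_le by blast
    then have "(\<Sum>j\<in>UNIV. a j) < (\<Sum>j\<in>(UNIV::'n set). (\<Sum>j\<in>UNIV. a j) / CARD('n))"
      by (intro sum_strict_mono) auto
    then show False by simp
  qed
  have "f ((\<Sum>j\<in>UNIV. a j) / CARD('n)) \<le> f (a j)"
    using j assms(1) by (intro mono sum_nonneg divide_nonneg_nonneg) auto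
  also have "\<dots> \<le> (\<Sum>j\<in>UNIV. f (a j))"
    by (rule member_le_sum[of j UNIV "\<lambda>j. f (a j)"]) (auto intro: nonneg assms(1))
  finally show ?thesis .
qed

text \<open>If the limit \<open>L\<close> were positive, every step would decrease \<open>t\<close> by at least \<open>g L > 0\<close>.\<close>
lemma tendsto_zero_of_defect_decrease:
  fixes t :: "nat \<Rightarrow> real" and g :: "real \<Rightarrow> real"
  assumes t_nonneg: "\<And>l. 0 \<le> t l"
    and step: "\<And>l. t (Suc l) \<le> t l - g (t l)"
    and mono: "\<And>u v. 0 \<le> u \<Longrightarrow> u \<le> v \<Longrightarrow> g u \<le> g v"
    and nonneg: "\<And>u. 0 \<le> u \<Longrightarrow> 0 \<le> g u"
    and pos: "\<And>u. 0 < u \<Longrightarrow> 0 < g u"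
  shows "t \<longlonglongrightarrow> 0"
proof -
  have "decseq t"
  proof (rule decseq_SucI)
    show "t (Suc l) \<le> t l" for l
      using step[of l] nonneg[OF t_nonneg[of l]] by linarith
  qed
  then obtain L where L: "t \<longlonglongrightarrow> L" "\<And>l. L \<le> t l"
    using decseq_convergent[OF \<open>decseq t\<close>, of 0] t_nonneg by blast
  have "0 \<le> L"
    using t_nonneg by (intro LIMSEQ_le_const[OF L(1)]) auto
  have "L \<le> L - g L"
  proof (rule LIMSEQ_le[OF LIMSEQ_Suc[OF L(1)]])
    show "(\<lambda>l. t l - g L) \<longlonglongrightarrow> L - g L"
      using L(1) by (intro tendsto_intros)
    show "\<exists>N. \<forall>l\<ge>N. t (Suc l) \<le> t l - g L"
    proof (intro exI allI impI)
      fix l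
      show "t (Suc l) \<le> t l - g L"
        using step[of l] mono[OF \<open>0 \<le> L\<close> L(2)[of l]] by linarith
    qed
  qed
  then have "\<not> 0 < L"
    using pos[of L] by linarith
  then show ?thesis
    using L(1) \<open>0 \<le> L\<close> by simp
qed

lemma tanh_trace_tendsto_zero:
  fixes X :: "real^'d^'n"
  assumes "adjacency_matrix A"
  shows "(\<lambda>l. trace (Sigma_seq tanh 1 A X l)) \<longlonglongrightarrow> 0"
proof (rule tendsto_zero_of_defect_decrease[where g = "\<lambda>u. exp_defect (u / CARD('n))"])
  let ?S = "Sigma_seq tanh 1 A X"
  have psd: "psd (?S l)" for l
    using assms tanh_measurable abs_tanh_le_one by (intro psd_Sigma_seq) auto
  show "0 \<le> trace (?S l)" for l
    unfolding trace_def using psd by (intro sum_nonneg psd_diag_nonneg)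
  show "trace (?S (Suc l)) \<le> trace (?S l) - exp_defect (trace (?S l) / CARD('n))" for l
  proof -
    have "exp_defect (trace (?S l) / CARD('n)) \<le> (\<Sum>j\<in>UNIV. exp_defect (?S l $ j $ j))"
      unfolding trace_def using psd
      by (intro mono_average_le_sum exp_defect_mono exp_defect_nonneg psd_diag_nonneg)
    then show ?thesis
      using trace_Sigma_seq_Suc_le[OF assms, of 1 X l] by simp
  qed
  show "exp_defect (u / CARD('n)) \<le> exp_defect (v / CARD('n))" if "0 \<le> u" "u \<le> v" for u v
    using that by (intro exp_defect_mono divide_right_mono) auto
qed (auto intro: exp_defect_nonneg exp_defect_pos)

lemma tanh_trace_le_power:
  fixes X :: "real^'d^'n"
  assumes "adjacency_matrix A" "0 \<le> s"
  shows "trace (Sigma_seq tanh s A X l) \<le> s ^ Suc l / real CARD('d) * frob_sq X"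
proof (induction l)
  case 0
  then show ?case using trace_Sigma_seq_0_le[OF assms(1,2)] by simp
next
  case (Suc l)
  let ?S = "Sigma_seq tanh s A X l"
  have "trace (Sigma_seq tanh s A X (Suc l)) \<le> s * (trace ?S - (\<Sum>j\<in>UNIV. exp_defect (?S $ j $ j)))"
    by (rule trace_Sigma_seq_Suc_le[OF assms(1,2)])
  also have "\<dots> \<le> s * trace ?S"
    using assms(2) by (intro mult_left_mono) (auto intro!: sum_nonneg exp_defect_nonneg)
  also have "\<dots> \<le> s * (s ^ Suc l / real CARD('d) * frob_sq X)"
    using assms(2) Suc by (rule mult_left_mono[rotated])
  finally show ?case by simp
qed

theorem mainTheorem6:
  fixes A :: "real^'n::finite^'n" and X :: "real^'d::finite^'n" and C :: nat
  assumes "adjacency_matrix A"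
    and "X \<noteq> 0"
    and "C \<ge> 1"
  shows "((\<lambda>L. FSP tanh C A X L 1) \<longlonglongrightarrow> 0)
     \<and> (\<forall>s::real. 0 < s \<and> s < 1 \<longrightarrow>
          (\<forall>L\<ge>1. FSP tanh C A X L s \<le> real C / real CARD('d) * s ^ L))"
proof -
  have F: "0 < frob_sq X" using frob_sq_pos[OF assms(2)] .
  have "(\<lambda>L. trace (Sigma_seq tanh 1 A X (L - 1))) \<longlonglongrightarrow> 0"
    by (rule LIMSEQ_imp_Suc) (simp add: tanh_trace_tendsto_zero[OF assms(1)])
  then have "(\<lambda>L. real C * trace (Sigma_seq tanh 1 A X (L - 1)) / frob_sq X) \<longlonglongrightarrow> real C * 0 / frob_sq X"
    using F by (intro tendsto_intros) auto
  moreover have "FSP tanh C A X L s \<le> real C / real CARD('d) * s ^ L"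
    if "0 < s" "s < 1" "1 \<le> L" for s L
  proof -
    have "trace (Sigma_seq tanh s A X (L - 1)) \<le> s ^ L / real CARD('d) * frob_sq X"
      using tanh_trace_le_power[OF assms(1), of s X "L - 1"] that by simp
    then have "FSP tanh C A X L s \<le> real C * (s ^ L / real CARD('d) * frob_sq X) / frob_sq X"
      unfolding FSP_tanh_eq_trace[OF assms(1) less_imp_le[OF that(1)]] using F by (intro divide_right_mono mult_left_mono) auto
    then show ?thesis using F by simp
  qed
  ultimately show ?thesis by (simp add: FSP_tanh_eq_trace[OF assms(1)])
qed

end
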